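(* Let $n\ge 2$, $R>0$, let $\sigma:[0,R]\to[0,\infty)$ be smooth with $\sigma(0)=0$, $\sigma'(0)=1$, $\sigma(r)>0$ on $(0,R]$, and suppose $K(r)=-\sigma''(r)/\sigma(r)\ge k$ on $(0,R]$ for some $k\in\mathbb{R}$ (with $R<\pi/\sqrt{k}$ if $k>0$). Let $g=dr^2+\sigma^2(r)\,du^2$ and $\mathrm{can}_k=dr^2+\sin_k^2(r)\,du^2$ on the ball $B_R\subset\mathbb{R}^n$ (polar coordinates $(r,u)$, $u\in\mathbb{S}^{n-1}$). Then for every $f\in C^1(\overline{B_R})$ not identically zero on $\partial B_R$, $$\frac{\int_{B_R}\|\nabla f\|_g^2\,dv_g}{\int_{\partial B_R}f^2\,ds_g}\ \ge\ \frac{\int_{B_R}\|\nabla f\|_{\mathrm{can}_k}^2\,dv_{\mathrm{can}_k}}{\int_{\partial B_R}f^2\,ds_{\mathrm{can}_k}}.$$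
   Context: $\sin_k r = r$ if $k=0$; $\sin_k r=\sin(\sqrt{k}\,r)/\sqrt{k}$ if $k>0$; $\sin_k r=\sinh(\sqrt{-k}\,r)/\sqrt{-k}$ if $k<0$. $du^2$ is the standard metric on $\mathbb{S}^{n-1}$; $dv$ and $ds$ denote the Riemannian volume measures on $B_R$ and on $\partial B_R=\{r=R\}$ for the indicated metric, and $\|\nabla f\|$ the norm of the gradient in that metric. *)

theory Defs
  imports "HOL-Analysis.Analysis"
begin

definition sin_k :: "real \<Rightarrow> real \<Rightarrow> real" where
  "sin_k k r = (if k = 0 then r
                else if k > 0 then sin (sqrt k * r) / sqrt k
                else sinh (sqrt (- k) * r) / sqrt (- k))"

text \<open>Integral over the unit sphere S^(n-1) in real^'n w.r.t. the standard
  (Riemannian = Hausdorff) surface measure du, via the cone formula: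
  the integral of h over S equals n times the Lebesgue integral over the
  unit ball of x mapsto h(x/|x|).\<close>
definition sphere_integral :: "(real ^ 'n \<Rightarrow> real) \<Rightarrow> real" where
  "sphere_integral h =
     real CARD('n) * (LINT x : ball 0 1 | lborel. h (x /\<^sub>R norm x))"

text \<open>Squared norm of the gradient of f, w.r.t. the warped metric
  dr^2 + s(r)^2 du^2, at a point x /= 0, where Gx is the Euclidean gradient of f
  at x.  Writing r = |x|, u = x/r, a = Gx . u (radial derivative), and
  t = |Gx|^2 - a^2 (squared tangential Euclidean gradient, equal to
  r^(-2) |grad_u f|^2 on the sphere), the g-norm squared is
  a^2 + s(r)^(-2) |grad_u f|^2 = a^2 + (r / s r)^2 t.\<close>
definition warped_grad_sq :: "(real \<Rightarrow> real) \<Rightarrow> real ^ 'n \<Rightarrow> real ^ 'n \<Rightarrow> real" where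
  "warped_grad_sq s x Gx =
     (let r = norm x; a = Gx \<bullet> (x /\<^sub>R r)
      in a\<^sup>2 + (r / s r)\<^sup>2 * ((norm Gx)\<^sup>2 - a\<^sup>2))"

text \<open>Dirichlet energy on B_R w.r.t. dr^2 + s(r)^2 du^2 (f with Euclidean gradient G):
  the volume form is s(r)^(n-1) dr du = (s(|x|)/|x|)^(n-1) dx.\<close>
definition warped_energy :: "(real \<Rightarrow> real) \<Rightarrow> real \<Rightarrow> (real ^ 'n \<Rightarrow> real ^ 'n) \<Rightarrow> real" where
  "warped_energy s R G =
     (LINT x : ball 0 R | lborel.
        warped_grad_sq s x (G x) * (s (norm x) / norm x) ^ (CARD('n) - 1))"

text \<open>Integral of f^2 over the boundary sphere r = R w.r.t. the induced measure
  ds = s(R)^(n-1) du.\<close>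
definition warped_boundary :: "(real \<Rightarrow> real) \<Rightarrow> real \<Rightarrow> (real ^ 'n \<Rightarrow> real) \<Rightarrow> real" where
  "warped_boundary s R f =
     s R ^ (CARD('n) - 1) * sphere_integral (\<lambda>u::real^'n. (f (R *\<^sub>R u))\<^sup>2)"

end

theory Submission
  imports Defs
begin

text \<open>
  Dividing energy and boundary integral by \<open>s(R)^(n-1)\<close> writes the quotient for a warping
  function \<open>s\<close> as \<open>\<integral> (\<partial>\<^sub>r f\<^sup>2 + (r/s(r))\<^sup>2 |\<nabla>\<^sub>T f|\<^sup>2) (s(r)/s(R))^(n-1) r^(1-n) dx\<close> over
  \<open>\<integral>\<^sub>S f(Ru)\<^sup>2 du\<close>, whose denominator does not depend on \<open>s\<close>.  The integrand for \<open>sin\<^sub>k\<close> is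
  pointwise at most the one for \<open>\<sigma>\<close>, since \<open>\<sigma> \<le> sin\<^sub>k\<close> (tangential term) and
  \<open>\<sigma>(r)/\<sigma>(R) \<ge> sin\<^sub>k(r)/sin\<^sub>k(R)\<close> (volume term).  Both are Sturm comparison: the Wronskian
  \<open>\<sigma>' sin\<^sub>k - \<sigma> cos\<^sub>k\<close> vanishes at \<open>0\<close> and has derivative \<open>sin\<^sub>k (\<sigma>'' + k\<sigma>) \<le> 0\<close>, so
  \<open>\<sigma>/sin\<^sub>k\<close> decreases from its limit \<open>1\<close> at \<open>0\<close>.
\<close>

definition cos_k :: "real \<Rightarrow> real \<Rightarrow> real" where
  "cos_k k r = (if k = 0 then 1
                else if k > 0 then cos (sqrt k * r)
                else cosh (sqrt (- k) * r))"

lemma sin_k_0 [simp]: "sin_k k 0 = 0" and cos_k_0 [simp]: "cos_k k 0 = 1"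
  by (auto simp: sin_k_def cos_k_def)

lemma has_real_derivative_sin_k: "(sin_k k has_real_derivative cos_k k x) (at x)"
proof -
  consider "k = 0" | "k > 0" | "k < 0" by linarith
  then show ?thesis
  proof cases
    case 1
    then show ?thesis unfolding sin_k_def cos_k_def
      by (auto intro!: derivative_eq_intros)
  next
    case 2
    have "((\<lambda>r. sin (sqrt k * r) / sqrt k) has_real_derivative cos (sqrt k * x)) (at x)"
      using 2 by (auto intro!: derivative_eq_intros simp: mult.assoc)
    then show ?thesis using 2 unfolding sin_k_def[abs_def] cos_k_def by simp
  next
    case 3
    have e: "sqrt (-k) * sqrt (-k) = -k" using 3 by simp
    have "((\<lambda>r. sinh (sqrt (-k) * r) / sqrt (-k)) has_real_derivative cosh (sqrt (-k) * x)) (at x)"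
      using 3 by (auto intro!: derivative_eq_intros simp: mult.assoc e)
    then show ?thesis using 3 unfolding sin_k_def[abs_def] cos_k_def by simp
  qed
qed

lemma has_real_derivative_cos_k: "(cos_k k has_real_derivative - k * sin_k k x) (at x)"
proof -
  consider "k = 0" | "k > 0" | "k < 0" by linarith
  then show ?thesis
  proof cases
    case 1
    then show ?thesis unfolding sin_k_def cos_k_def
      by (auto intro!: derivative_eq_intros)
  next
    case 2
    have "((\<lambda>r. cos (sqrt k * r)) has_real_derivative - k * (sin (sqrt k * x) / sqrt k)) (at x)"
      using 2 by (auto intro!: derivative_eq_intros simp: field_simps)
    then show ?thesis using 2 unfolding sin_k_def cos_k_def[abs_def] by simp
  next
    case 3
    have e: "sqrt (-k) * sqrt (-k) = -k" using 3 by simp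
    have "((\<lambda>r. cosh (sqrt (-k) * r)) has_real_derivative - k * (sinh (sqrt (-k) * x) / sqrt (-k))) (at x)"
      using 3 by (auto intro!: derivative_eq_intros simp: field_simps mult.assoc[symmetric] e)
    then show ?thesis using 3 unfolding sin_k_def cos_k_def[abs_def] by simp
  qed
qed

lemma sin_k_pos:
  assumes "0 < r" and "k > 0 \<Longrightarrow> r < pi / sqrt k"
  shows "0 < sin_k k r"
proof -
  consider "k = 0" | "k > 0" | "k < 0" by linarith
  then show ?thesis
  proof cases
    case 1
    then show ?thesis using assms by (simp add: sin_k_def)
  next
    case 2
    have "sqrt k * r < pi" using assms(2)[OF 2] 2 by (simp add: field_simps)
    then have "sin (sqrt k * r) > 0" using 2 assms(1) by (intro sin_gt_zero) auto
    then show ?thesis using 2 by (simp add: sin_k_def)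
  next
    case 3
    then show ?thesis using assms(1) by (simp add: sin_k_def)
  qed
qed

locale sturm_comparison =
  fixes \<sigma> \<sigma>' \<sigma>'' :: "real \<Rightarrow> real" and R k :: real
  assumes R_pos: "0 < R"
    and has_derivative_\<sigma>: "\<And>x. x \<in> {0..R} \<Longrightarrow> (\<sigma> has_real_derivative \<sigma>' x) (at x within {0..R})"
    and has_derivative_\<sigma>': "\<And>x. x \<in> {0..R} \<Longrightarrow> (\<sigma>' has_real_derivative \<sigma>'' x) (at x within {0..R})"
    and \<sigma>_0: "\<sigma> 0 = 0" and \<sigma>'_0: "\<sigma>' 0 = 1"
    and curvature: "\<And>r. r \<in> {0<..R} \<Longrightarrow> \<sigma>'' r \<le> - k * \<sigma> r"
    and radius: "k > 0 \<Longrightarrow> R < pi / sqrt k"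
begin

lemma sin_k_pos_on: "r \<in> {0<..R} \<Longrightarrow> 0 < sin_k k r"
  using radius by (intro sin_k_pos) auto

lemma wronskian_nonpos:
  assumes "x \<in> {0<..R}"
  shows "\<sigma>' x * sin_k k x - \<sigma> x * cos_k k x \<le> 0"
proof -
  define W where "W y = \<sigma>' y * sin_k k y - \<sigma> y * cos_k k y" for y
  have W': "(W has_real_derivative sin_k k y * (\<sigma>'' y + k * \<sigma> y)) (at y within {0..R})"
    if "y \<in> {0..R}" for y
  proof -
    have "((\<lambda>y. \<sigma>' y * sin_k k y - \<sigma> y * cos_k k y) has_real_derivative
       \<sigma>'' y * sin_k k y + cos_k k y * \<sigma>' y - (\<sigma>' y * cos_k k y + (- k * sin_k k y) * \<sigma> y))
       (at y within {0..R})"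
      by (intro DERIV_diff DERIV_mult has_derivative_\<sigma> has_derivative_\<sigma>' that
          has_field_derivative_at_within[OF has_real_derivative_sin_k]
          has_field_derivative_at_within[OF has_real_derivative_cos_k])
    then show ?thesis unfolding W_def[abs_def] by (simp add: algebra_simps)
  qed
  have "W x \<le> W 0"
  proof (rule DERIV_nonpos_imp_decreasing_open[of 0 x W])
    fix y assume y: "0 < y" "y < x"
    then have y_R: "y \<in> {0<..R}" and "y \<in> interior {0..R}" using assms by auto
    then have "DERIV W y :> sin_k k y * (\<sigma>'' y + k * \<sigma> y)"
      using W'[of y] at_within_interior[of y "{0..R}"] by auto
    moreover have "sin_k k y * (\<sigma>'' y + k * \<sigma> y) \<le> 0"
      using curvature[OF y_R] sin_k_pos_on[OF y_R] by (intro mult_nonneg_nonpos) auto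
    ultimately show "\<exists>z. DERIV W y :> z \<and> z \<le> 0" by blast
  next
    show "continuous_on {0..x} W"
      using assms by (intro continuous_on_subset[OF DERIV_continuous_on[OF W']]) auto
  qed (use assms in auto)
  then show ?thesis using \<sigma>_0 by (simp add: W_def)
qed

lemma ratio_sin_k_antimono:
  assumes "0 < a" "a \<le> b" "b \<le> R"
  shows "\<sigma> b / sin_k k b \<le> \<sigma> a / sin_k k a"
proof (rule DERIV_nonpos_imp_decreasing_open[OF \<open>a \<le> b\<close>])
  fix y assume y: "a < y" "y < b"
  then have y_R: "y \<in> {0<..R}" and "y \<in> interior {0..R}" using assms by auto
  then have "DERIV \<sigma> y :> \<sigma>' y"
    using has_derivative_\<sigma>[of y] at_within_interior[of y "{0..R}"] by auto
  then have "DERIV (\<lambda>y. \<sigma> y / sin_k k y) y :>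
      (\<sigma>' y * sin_k k y - \<sigma> y * cos_k k y) / (sin_k k y * sin_k k y)"
    using sin_k_pos_on[OF y_R] by (intro DERIV_divide has_real_derivative_sin_k) auto
  moreover have "(\<sigma>' y * sin_k k y - \<sigma> y * cos_k k y) / (sin_k k y * sin_k k y) \<le> 0"
    using wronskian_nonpos[OF y_R] by (intro divide_nonpos_nonneg) auto
  ultimately show "\<exists>z. DERIV (\<lambda>y. \<sigma> y / sin_k k y) y :> z \<and> z \<le> 0" by blast
next
  have "continuous_on {a..b} \<sigma>"
    using assms by (intro continuous_on_subset[OF DERIV_continuous_on[OF has_derivative_\<sigma>]]) auto
  moreover have "continuous_on {a..b} (sin_k k)"
    by (rule DERIV_continuous_on[OF has_field_derivative_at_within[OF has_real_derivative_sin_k]])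
  moreover have "sin_k k y \<noteq> 0" if "y \<in> {a..b}" for y
    using sin_k_pos_on[of y] that assms by auto
  ultimately show "continuous_on {a..b} (\<lambda>y. \<sigma> y / sin_k k y)"
    by (intro continuous_on_divide) auto
qed

lemma ratio_sin_k_tendsto_1: "((\<lambda>y. \<sigma> y / sin_k k y) \<longlongrightarrow> 1) (at_right 0)"
proof -
  have "((\<lambda>y. \<sigma> y / y) \<longlongrightarrow> 1) (at_right 0)"
    using has_derivative_\<sigma>[of 0] R_pos \<sigma>_0 \<sigma>'_0 unfolding has_field_derivative_iff
    by (simp add: at_within_Icc_at_right)
  moreover have "((\<lambda>y. sin_k k y / y) \<longlongrightarrow> 1) (at_right 0)"
    using has_field_derivative_at_within[OF has_real_derivative_sin_k[of k 0], of "{0<..}"]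
    unfolding has_field_derivative_iff by simp
  ultimately have "((\<lambda>y. (\<sigma> y / y) / (sin_k k y / y)) \<longlongrightarrow> 1 / 1) (at_right 0)"
    by (rule tendsto_divide) simp_all
  moreover have "eventually (\<lambda>y. (\<sigma> y / y) / (sin_k k y / y) = \<sigma> y / sin_k k y) (at_right 0)"
    by (rule eventually_mono[OF eventually_at_right_less]) simp
  ultimately show ?thesis
    by (simp add: Lim_transform_eventually)
qed

lemma le_sin_k:
  assumes "r \<in> {0<..R}"
  shows "\<sigma> r \<le> sin_k k r"
proof -
  have "\<sigma> r / sin_k k r \<le> 1"
  proof (rule tendsto_le[OF _ ratio_sin_k_tendsto_1 tendsto_const])
    show "eventually (\<lambda>y. \<sigma> r / sin_k k r \<le> \<sigma> y / sin_k k y) (at_right 0)"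
      unfolding eventually_at_right_field using assms
      by (intro exI[of _ r]) (auto intro!: ratio_sin_k_antimono)
  qed simp
  then show ?thesis using sin_k_pos_on[OF assms] by (simp add: divide_le_eq)
qed

lemma boundary_ratio_le:
  assumes "r \<in> {0<..R}"
  shows "\<sigma> R * sin_k k r \<le> \<sigma> r * sin_k k R"
  using ratio_sin_k_antimono[of r R] sin_k_pos_on[OF assms] sin_k_pos_on[of R] assms R_pos
  by (simp add: divide_le_eq le_divide_eq mult.commute)

end

lemma quotient_by_radius_bounds:
  fixes h :: "real \<Rightarrow> real"
  assumes "0 < R" and h_cont: "continuous_on {0..R} h"
    and h_deriv: "(h has_real_derivative d) (at 0 within {0..R})"
    and "h 0 = 0" "0 < d" and h_pos: "\<And>r. r \<in> {0<..R} \<Longrightarrow> 0 < h r"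
  shows "\<exists>m>0. \<exists>M. \<forall>r\<in>{0<..R}. m \<le> h r / r \<and> h r / r \<le> M"
proof -
  define \<phi> where "\<phi> r = (if r = 0 then d else h r / r)" for r
  have "continuous (at x within {0..R}) \<phi>" if x: "x \<in> {0..R}" for x
  proof (cases "x = 0")
    case True
    have "((\<lambda>y. (h y - h 0) / (y - 0)) \<longlongrightarrow> d) (at 0 within {0..R})"
      using h_deriv unfolding has_field_derivative_iff by simp
    moreover have "eventually (\<lambda>y. (h y - h 0) / (y - 0) = \<phi> y) (at 0 within {0..R})"
      unfolding eventually_at_filter by (simp add: \<phi>_def \<open>h 0 = 0\<close>)
    ultimately have "(\<phi> \<longlongrightarrow> d) (at 0 within {0..R})" using tendsto_cong by fastforce
    then show ?thesis using True by (simp add: continuous_within \<phi>_def)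
  next
    case False
    have "((\<lambda>y. h y / y) \<longlongrightarrow> h x / x) (at x within {0..R})"
      using h_cont x False unfolding continuous_on_eq_continuous_within continuous_within
      by (intro tendsto_divide tendsto_ident_at) auto
    moreover have "eventually (\<lambda>y. h y / y = \<phi> y) (at x within {0..R})"
      unfolding eventually_at using False x
      by (intro exI[of _ x]) (auto simp: \<phi>_def dist_real_def)
    ultimately have "(\<phi> \<longlongrightarrow> h x / x) (at x within {0..R})" using tendsto_cong by fastforce
    then show ?thesis using False by (simp add: continuous_within \<phi>_def)
  qed
  then have \<phi>_cont: "continuous_on {0..R} \<phi>"
    using continuous_on_eq_continuous_within by blast
  obtain x1 where x1: "x1 \<in> {0..R}" "\<And>y. y \<in> {0..R} \<Longrightarrow> \<phi> x1 \<le> \<phi> y"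
    using continuous_attains_inf[OF compact_Icc _ \<phi>_cont] \<open>0 < R\<close> by auto
  obtain x2 where x2: "\<And>y. y \<in> {0..R} \<Longrightarrow> \<phi> y \<le> \<phi> x2"
    using continuous_attains_sup[OF compact_Icc _ \<phi>_cont] \<open>0 < R\<close> by fastforce
  have "\<phi> x1 \<le> h r / r \<and> h r / r \<le> \<phi> x2" if "r \<in> {0<..R}" for r
    using x1(2)[of r] x2[of r] that by (auto simp: \<phi>_def)
  moreover have "\<phi> x1 > 0" using x1(1) h_pos[of x1] \<open>0 < d\<close> by (auto simp: \<phi>_def)
  ultimately show ?thesis by blast
qed

lemma radial_component_sq_le: "(v \<bullet> (x /\<^sub>R norm x))\<^sup>2 \<le> (norm v)\<^sup>2"
proof -
  have "norm (x /\<^sub>R norm x) \<le> 1"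
    by (cases "x = 0") auto
  then have "\<bar>v \<bullet> (x /\<^sub>R norm x)\<bar> \<le> norm v"
    using Cauchy_Schwarz_ineq2[of v "x /\<^sub>R norm x"] mult_left_le[of _ "norm v"] by force
  then show ?thesis
    using power_mono[of "\<bar>v \<bullet> (x /\<^sub>R norm x)\<bar>" "norm v" 2] by simp
qed

lemma warped_grad_sq_bounds:
  "0 \<le> warped_grad_sq h x v \<and> warped_grad_sq h x v \<le> (1 + (norm x / h (norm x))\<^sup>2) * (norm v)\<^sup>2"
proof -
  define a where "a = v \<bullet> (x /\<^sub>R norm x)"
  define w where "w = (norm x / h (norm x))\<^sup>2"
  have "0 \<le> w" and a_le: "a\<^sup>2 \<le> (norm v)\<^sup>2"
    unfolding w_def a_def by (simp_all only: zero_le_power2 radial_component_sq_le)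
  then have "0 \<le> w * ((norm v)\<^sup>2 - a\<^sup>2)" and "w * ((norm v)\<^sup>2 - a\<^sup>2) \<le> w * (norm v)\<^sup>2"
    by (simp_all add: mult_left_mono)
  moreover have "warped_grad_sq h x v = a\<^sup>2 + w * ((norm v)\<^sup>2 - a\<^sup>2)"
    by (simp add: warped_grad_sq_def Let_def a_def w_def)
  moreover have "(1 + w) * (norm v)\<^sup>2 = (norm v)\<^sup>2 + w * (norm v)\<^sup>2"
    by (simp add: algebra_simps)
  ultimately show ?thesis
    using a_le zero_le_power2[of a] unfolding w_def by linarith
qed

definition normalized_density ::
  "(real \<Rightarrow> real) \<Rightarrow> real \<Rightarrow> (real ^ 'n \<Rightarrow> real ^ 'n) \<Rightarrow> real ^ 'n \<Rightarrow> real" where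
  "normalized_density h R G x = indicator (ball 0 R) x *
     (warped_grad_sq h x (G x) * (h (norm x) / norm x) ^ (CARD('n) - 1) / h R ^ (CARD('n) - 1))"

lemma warped_energy_ratio_eq:
  fixes G :: "real ^ 'n \<Rightarrow> real ^ 'n" and f :: "real ^ 'n \<Rightarrow> real"
  shows "warped_energy h R G / warped_boundary h R f =
    integral\<^sup>L lborel (normalized_density h R G) / sphere_integral (\<lambda>u::real^'n. (f (R *\<^sub>R u))\<^sup>2)"
proof -
  have "integral\<^sup>L lborel (normalized_density h R G) = integral\<^sup>L lborel (\<lambda>x. (indicator (ball 0 R) x *\<^sub>R
      (warped_grad_sq h x (G x) * (h (norm x) / norm x) ^ (CARD('n) - 1))) / h R ^ (CARD('n) - 1))"
    by (rule Bochner_Integration.integral_cong) (simp_all add: normalized_density_def)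
  also have "\<dots> = warped_energy h R G / h R ^ (CARD('n) - 1)"
    by (simp only: integral_divide_zero warped_energy_def set_lebesgue_integral_def)
  finally show ?thesis
    by (simp add: warped_boundary_def divide_divide_eq_left)
qed

lemma sphere_integral_nonneg: "(\<And>u. 0 \<le> h u) \<Longrightarrow> 0 \<le> sphere_integral h"
  unfolding sphere_integral_def set_lebesgue_integral_def
  by (intro mult_nonneg_nonneg Bochner_Integration.integral_nonneg) auto

lemma warped_weight_le:
  fixes r a b c d A t :: real and N :: nat
  assumes "0 < r" "0 < a" "0 < c" "0 < d" "a \<le> b" "c * b \<le> a * d" "0 \<le> A" "0 \<le> t"
  shows "(A + (r / b)\<^sup>2 * t) * (b / r) ^ N / d ^ N \<le> (A + (r / a)\<^sup>2 * t) * (a / r) ^ N / c ^ N"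
proof -
  have "0 < b" using assms by linarith
  have "(r / b)\<^sup>2 \<le> (r / a)\<^sup>2"
    using assms by (intro power_mono divide_left_mono) auto
  then have tangential: "A + (r / b)\<^sup>2 * t \<le> A + (r / a)\<^sup>2 * t"
    using assms by (simp add: mult_right_mono)
  have "b / (r * d) \<le> a / (r * c)"
    using assms \<open>0 < b\<close> by (simp add: divide_le_eq le_divide_eq algebra_simps mult_left_mono)
  then have "(b / (r * d)) ^ N \<le> (a / (r * c)) ^ N"
    using assms \<open>0 < b\<close> by (intro power_mono) auto
  then have volume: "(b / r) ^ N / d ^ N \<le> (a / r) ^ N / c ^ N"
    by (simp add: power_divide power_mult_distrib)
  have "(A + (r / b)\<^sup>2 * t) * ((b / r) ^ N / d ^ N) \<le> (A + (r / a)\<^sup>2 * t) * ((a / r) ^ N / c ^ N)"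
    using assms \<open>0 < b\<close> by (intro mult_mono tangential volume) auto
  then show ?thesis by simp
qed

lemma normalized_density_le:
  fixes \<sigma> \<tau> :: "real \<Rightarrow> real" and G :: "real ^ 'n \<Rightarrow> real ^ 'n"
  assumes "0 < R" and \<sigma>_pos: "\<And>r. r \<in> {0<..R} \<Longrightarrow> 0 < \<sigma> r"
    and le: "\<And>r. r \<in> {0<..R} \<Longrightarrow> \<sigma> r \<le> \<tau> r"
    and cross: "\<And>r. r \<in> {0<..R} \<Longrightarrow> \<sigma> R * \<tau> r \<le> \<sigma> r * \<tau> R"
  shows "normalized_density \<tau> R G x \<le> normalized_density \<sigma> R G x"
proof (cases "x \<in> ball 0 R \<and> x \<noteq> 0")
  case False
  then show ?thesis
    by (auto simp: normalized_density_def warped_grad_sq_def)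
next
  case True
  define r where "r = norm x"
  define a where "a = G x \<bullet> (x /\<^sub>R r)"
  have r: "r \<in> {0<..R}" using True by (auto simp: r_def)
  have "a\<^sup>2 \<le> (norm (G x))\<^sup>2"
    unfolding a_def r_def by (rule radial_component_sq_le)
  have density: "normalized_density h R G x =
      (a\<^sup>2 + (r / h r)\<^sup>2 * ((norm (G x))\<^sup>2 - a\<^sup>2)) * (h r / r) ^ (CARD('n) - 1) / h R ^ (CARD('n) - 1)"
    for h
    using True by (simp add: normalized_density_def warped_grad_sq_def Let_def a_def r_def)
  have "\<sigma> R \<le> \<tau> R" and "0 < \<sigma> R" and "0 < \<sigma> r"
    using \<sigma>_pos le r \<open>0 < R\<close> by auto
  then show ?thesis
    unfolding density
    by (intro warped_weight_le cross[OF r] le[OF r]) (use r \<open>a\<^sup>2 \<le> _\<close> in auto)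
qed

lemma borel_measurable_normalized_density:
  fixes h :: "real \<Rightarrow> real" and G :: "real ^ 'n \<Rightarrow> real ^ 'n"
  assumes h_cont: "continuous_on {0<..<R} h" and "\<And>r. r \<in> {0<..<R} \<Longrightarrow> h r \<noteq> 0"
    and "h R \<noteq> 0" and G_cont: "continuous_on (cball 0 R) G"
  shows "normalized_density h R G \<in> borel_measurable lborel"
proof -
  define g where "g x = warped_grad_sq h x (G x) * (h (norm x) / norm x) ^ (CARD('n) - 1)
    / h R ^ (CARD('n) - 1)" for x :: "real ^ 'n"
  let ?S = "ball (0::real^'n) R - {0}"
  have "continuous_on ?S (\<lambda>x. h (norm x))"
    by (rule continuous_on_compose2[OF h_cont continuous_on_norm_id]) auto
  moreover have "continuous_on ?S G"
    by (rule continuous_on_subset[OF G_cont]) auto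
  ultimately have g_cont: "continuous_on ?S g"
    unfolding g_def warped_grad_sq_def Let_def using assms(2,3)
    by (intro continuous_intros) auto
  have "(\<lambda>x. indicator ?S x *\<^sub>R g x) \<in> borel_measurable borel"
    by (rule borel_measurable_continuous_on_indicator[OF _ g_cont]) auto
  moreover have "(\<lambda>x. indicator ?S x *\<^sub>R g x) = normalized_density h R G"
    by (auto simp: indicator_def fun_eq_iff g_def normalized_density_def warped_grad_sq_def)
  ultimately show ?thesis by simp
qed

lemma integrable_normalized_density:
  fixes h h' :: "real \<Rightarrow> real" and G :: "real ^ 'n \<Rightarrow> real ^ 'n"
  assumes "0 < R"
    and h_deriv: "\<And>x. x \<in> {0..R} \<Longrightarrow> (h has_real_derivative h' x) (at x within {0..R})"
    and "h 0 = 0" "0 < h' 0" and h_pos: "\<And>r. r \<in> {0<..R} \<Longrightarrow> 0 < h r"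
    and G_cont: "continuous_on (cball 0 R) G"
  shows "integrable lborel (normalized_density h R G)"
proof -
  let ?N = "CARD('n) - 1"
  have h_cont: "continuous_on {0..R} h"
    by (rule DERIV_continuous_on[OF h_deriv])
  obtain m M where "0 < m" and mM: "\<And>r. r \<in> {0<..R} \<Longrightarrow> m \<le> h r / r \<and> h r / r \<le> M"
    using quotient_by_radius_bounds[OF \<open>0 < R\<close> h_cont h_deriv] assms by force
  obtain MG where MG: "\<And>x. x \<in> cball 0 R \<Longrightarrow> norm (G x) \<le> MG"
    using compact_imp_bounded[OF compact_continuous_image[OF G_cont compact_cball]]
    unfolding bounded_iff by blast
  define C where "C = (1 + (1 / m)\<^sup>2) * MG\<^sup>2 * M ^ ?N / h R ^ ?N"
  have "0 \<le> C"
    using mM[of R] \<open>0 < m\<close> \<open>0 < R\<close> h_pos[of R] by (simp add: C_def)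
  have bound: "norm (normalized_density h R G x) \<le> indicator (ball 0 R) x * C" for x
  proof (cases "x \<in> ball 0 R \<and> x \<noteq> 0")
    case False
    then show ?thesis
      using \<open>0 \<le> C\<close> by (auto simp: normalized_density_def warped_grad_sq_def)
  next
    case True
    define r where "r = norm x"
    have r: "r \<in> {0<..R}" using True by (auto simp: r_def)
    have "r / h r \<le> 1 / m"
      using mM[OF r] \<open>0 < m\<close> r h_pos[OF r] by (simp add: divide_le_eq le_divide_eq mult.commute)
    then have "(1 + (r / h r)\<^sup>2) * (norm (G x))\<^sup>2 \<le> (1 + (1 / m)\<^sup>2) * MG\<^sup>2"
      using MG[of x] True r h_pos[OF r] by (intro mult_mono power_mono add_left_mono) auto
    then have "0 \<le> warped_grad_sq h x (G x) \<and> warped_grad_sq h x (G x) \<le> (1 + (1 / m)\<^sup>2) * MG\<^sup>2"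
      using warped_grad_sq_bounds[of h x "G x"] unfolding r_def by linarith
    moreover have "0 \<le> (h r / r) ^ ?N \<and> (h r / r) ^ ?N \<le> M ^ ?N"
      using mM[OF r] r h_pos[OF r] by (auto intro: power_mono)
    ultimately have "warped_grad_sq h x (G x) * (h r / r) ^ ?N \<le> (1 + (1 / m)\<^sup>2) * MG\<^sup>2 * M ^ ?N"
      "0 \<le> warped_grad_sq h x (G x) * (h r / r) ^ ?N"
      by (auto intro: mult_mono)
    then show ?thesis
      using True h_pos[of R] \<open>0 < R\<close>
      by (simp add: normalized_density_def C_def r_def[symmetric] divide_right_mono)
  qed
  show ?thesis
  proof (rule Bochner_Integration.integrable_bound)
    show "integrable lborel (\<lambda>x. indicator (ball 0 R) x * C)"
      by (intro integrable_mult_left integrable_real_indicator emeasure_lborel_ball_finite) auto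
    show "normalized_density h R G \<in> borel_measurable lborel"
    proof (rule borel_measurable_normalized_density[OF _ _ _ G_cont])
      show "continuous_on {0<..<R} h"
        using h_cont by (rule continuous_on_subset) auto
      show "h r \<noteq> 0" if "r \<in> {0<..<R}" for r
        using h_pos[of r] that by auto
      show "h R \<noteq> 0"
        using h_pos[of R] \<open>0 < R\<close> by auto
    qed
    show "AE x in lborel. norm (normalized_density h R G x) \<le> norm (indicator (ball 0 R) x * C)"
      using bound \<open>0 \<le> C\<close> by (intro AE_I2) (simp add: abs_mult)
  qed
qed

theorem mainTheorem5:
  fixes \<sigma> :: "real \<Rightarrow> real" and D :: "nat \<Rightarrow> real \<Rightarrow> real"
    and R k :: real
    and f :: "real ^ 'n \<Rightarrow> real" and G :: "real ^ 'n \<Rightarrow> real ^ 'n"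
  assumes n2: "CARD('n) \<ge> 2"
    and Rpos: "R > 0"
    and D0: "D 0 = \<sigma>"
    and smooth: "\<And>m x. x \<in> {0..R} \<Longrightarrow>
                   (D m has_real_derivative D (Suc m) x) (at x within {0..R})"
    and sig0: "\<sigma> 0 = 0"
    and sig'0: "D 1 0 = 1"
    and sigpos: "\<And>r. r \<in> {0<..R} \<Longrightarrow> \<sigma> r > 0"
    and curv: "\<And>r. r \<in> {0<..R} \<Longrightarrow> - D 2 r / \<sigma> r \<ge> k"
    and Rk: "k > 0 \<Longrightarrow> R < pi / sqrt k"
    and f_C1: "\<And>x. x \<in> cball 0 R \<Longrightarrow>
                 (f has_derivative (\<lambda>h. G x \<bullet> h)) (at x within cball 0 R)"
    and G_cont: "continuous_on (cball 0 R) G"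
    and f_bdry: "\<exists>x\<in>sphere 0 R. f x \<noteq> 0"
  shows "warped_energy \<sigma> R G / warped_boundary \<sigma> R f
           \<ge> warped_energy (sin_k k) R G / warped_boundary (sin_k k) R f"
proof -
  have \<sigma>_deriv: "(\<sigma> has_real_derivative D 1 x) (at x within {0..R})" if "x \<in> {0..R}" for x
    using smooth[OF that, of 0] D0 by simp
  interpret sturm_comparison \<sigma> "D 1" "D 2" R k
  proof
    show "(D 1 has_real_derivative D 2 x) (at x within {0..R})" if "x \<in> {0..R}" for x
      using smooth[OF that, of 1] by (simp add: numeral_2_eq_2)
    show "D 2 r \<le> - k * \<sigma> r" if "r \<in> {0<..R}" for r
      using mult_right_mono[OF curv[OF that] less_imp_le[OF sigpos[OF that]]] sigpos[OF that]
      by simp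
  qed (use Rpos \<sigma>_deriv sig0 sig'0 Rk in auto)
  have "integral\<^sup>L lborel (normalized_density (sin_k k) R G) \<le>
      integral\<^sup>L lborel (normalized_density \<sigma> R G)"
  proof (rule integral_mono)
    show "integrable lborel (normalized_density \<sigma> R G)"
      using Rpos \<sigma>_deriv sig0 sig'0 sigpos G_cont
      by (intro integrable_normalized_density[where h' = "D 1"]) auto
    show "integrable lborel (normalized_density (sin_k k) R G)"
      using Rpos sin_k_pos_on G_cont
      by (intro integrable_normalized_density[where h' = "cos_k k"]
          has_field_derivative_at_within[OF has_real_derivative_sin_k]) auto
    show "normalized_density (sin_k k) R G x \<le> normalized_density \<sigma> R G x" for x
      using Rpos sigpos le_sin_k boundary_ratio_le by (rule normalized_density_le)
  qed
  \<comment> \<open>A vanishing boundary integral makes both sides \<open>0\<close>.\<close>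
  moreover have "0 \<le> sphere_integral (\<lambda>u::real^'n. (f (R *\<^sub>R u))\<^sup>2)"
    by (rule sphere_integral_nonneg) simp
  ultimately show ?thesis
    unfolding warped_energy_ratio_eq by (rule divide_right_mono)
qed

end
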